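(* For $\beta>-1$, $\alpha\in(0,1)$ and integer $T\ge2$, let $S_T(\alpha,\beta)=\sum_{t=1}^{T-1}\frac{1}{t^{1+\beta}(T-t)^{1+\alpha}}$ and, for $u>0$, $\xi_u=\sum_{k\ge1}k^{-(1+u)}$. Then $$S_T(\alpha,\beta)\le\frac{2^{2+\min(\alpha,\beta)}\,\xi_{\max(\alpha,\beta)}}{T^{1+\min(\alpha,\beta)}}.$$ *)

theory Defs
  imports Complex_Main
begin

definition S_sum :: "nat \<Rightarrow> real \<Rightarrow> real \<Rightarrow> real" where
  "S_sum T \<alpha> \<beta> = (\<Sum>t=1..T-1. 1 / ((real t) powr (1 + \<beta>) * (real (T - t)) powr (1 + \<alpha>)))"

definition xi :: "real \<Rightarrow> real" where
  "xi u = (\<Sum>k. (real (Suc k)) powr (-(1 + u)))"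

end

theory Submission
  imports Defs "HOL-Analysis.Summation_Tests"
begin

text \<open>
  If \<open>t \<le> T - t\<close>, then \<open>T - t \<ge> T/2\<close>; shifting the excess exponent \<open>max \<alpha> \<beta> - min \<alpha> \<beta>\<close>
  (if it sits on \<open>T - t\<close>) onto the smaller factor \<open>t\<close> only increases the summand, so it is at
  most \<open>(T/2) powr -(1 + min \<alpha> \<beta>) * t powr -(1 + max \<alpha> \<beta>)\<close>, and symmetrically for
  \<open>t > T - t\<close>. As \<open>t\<close> and \<open>T - t\<close> both run over \<open>1..T-1\<close>, the sum is at most twice a partial
  sum of the series defining \<open>xi (max \<alpha> \<beta>)\<close>.
\<close>

lemma powr_neg_mult_le_max_min:
  fixes x y p q :: real
  assumes "0 < x" "x \<le> y"
  shows "x powr -p * y powr -q \<le> x powr -(max p q) * y powr -(min p q)"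
proof (cases "p \<le> q")
  case True
  have split: "z powr -p = z powr (q - p) * z powr -q" for z :: real
    by (simp add: powr_add[symmetric])
  have "x powr (q - p) \<le> y powr (q - p)"
    using assms True by (intro powr_mono2) auto
  then have "x powr (q - p) * (x powr -q * y powr -q) \<le> y powr (q - p) * (x powr -q * y powr -q)"
    by (rule mult_right_mono) simp
  then show ?thesis
    using True by (simp add: split[of x] split[of y] mult_ac)
qed (simp add: max_def min_def)

lemma powr_neg_mult_le_min_half_sum:
  fixes x y p q :: real
  assumes "0 < x" "0 < y" "0 \<le> p" "0 \<le> q"
  shows "x powr -p * y powr -q \<le> min x y powr -(max p q) * ((x + y) / 2) powr -(min p q)"
proof -
  have ordered: "x powr -p * y powr -q \<le> x powr -(max p q) * ((x + y) / 2) powr -(min p q)"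
    if "0 < x" "x \<le> y" "0 \<le> min p q" for x y p q :: real
  proof -
    have "y powr -(min p q) \<le> ((x + y) / 2) powr -(min p q)"
      using that by (intro powr_mono2') auto
    then have "x powr -(max p q) * y powr -(min p q) \<le> x powr -(max p q) * ((x + y) / 2) powr -(min p q)"
      by (rule mult_left_mono) simp
    with powr_neg_mult_le_max_min[OF that(1,2), of p q] show ?thesis
      by linarith
  qed
  show ?thesis
  proof (cases "x \<le> y")
    case True
    then show ?thesis using ordered[of x y p q] assms by simp
  next
    case False
    then show ?thesis using ordered[of y x q p] assms
      by (simp add: min.commute max.commute mult.commute add.commute)
  qed
qed

lemma sum_min_reflect_le:
  fixes h :: "nat \<Rightarrow> real" and T :: nat
  assumes "\<And>k. 0 \<le> h k"
  shows "(\<Sum>t=1..T-1. h (min t (T - t))) \<le> 2 * (\<Sum>t=1..T-1. h t)"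
proof -
  have "(\<Sum>t=1..T-1. h (min t (T - t))) \<le> (\<Sum>t=1..T-1. h t + h (T - t))"
    using assms by (intro sum_mono) (simp add: min_def add_increasing add_increasing2)
  also have "\<dots> = (\<Sum>t=1..T-1. h t) + (\<Sum>t=1..T-1. h (T - t))"
    by (rule sum.distrib)
  also have "(\<Sum>t=1..T-1. h (T - t)) = (\<Sum>t=1..T-1. h t)"
    using sum.atLeastAtMost_rev[of h 1 "T - 1"]
    by (cases "T = 0") (simp_all add: add.commute)
  finally show ?thesis by simp
qed

lemma sum_powr_le_xi:
  assumes "0 < u"
  shows "(\<Sum>k=1..n. real k powr -(1 + u)) \<le> xi u"
proof -
  have "summable (\<lambda>k. real k powr -(1 + u))"
    using assms by (subst summable_real_powr_iff) auto
  then have "summable (\<lambda>k. real (Suc k) powr -(1 + u))"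
    by (subst summable_Suc_iff)
  then have "(\<Sum>k<n. real (Suc k) powr -(1 + u)) \<le> xi u"
    unfolding xi_def by (rule sum_le_suminf) auto
  moreover have "(\<Sum>k=1..n. real k powr -(1 + u)) = (\<Sum>k<n. real (Suc k) powr -(1 + u))"
    by (simp add: sum.atLeast1_atMost_eq)
  ultimately show ?thesis by simp
qed

lemma S_sum_summand_le:
  fixes a b :: real and t T :: nat
  assumes "-1 < a" "-1 < b" "0 < t" "t < T"
  shows "1 / (real t powr (1 + b) * real (T - t) powr (1 + a))
    \<le> (real T / 2) powr -(1 + min a b) * real (min t (T - t)) powr -(1 + max a b)"
proof -
  have total: "real t + real (T - t) = real T"
    using assms by (auto simp flip: of_nat_add)
  have "1 / (real t powr (1 + b) * real (T - t) powr (1 + a))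
      = real t powr -(1 + b) * real (T - t) powr -(1 + a)"
    unfolding powr_minus_divide by simp
  also have "\<dots> \<le> min (real t) (real (T - t)) powr -(max (1 + b) (1 + a))
      * ((real t + real (T - t)) / 2) powr -(min (1 + b) (1 + a))"
    using assms by (intro powr_neg_mult_le_min_half_sum) auto
  also have "\<dots> = (real T / 2) powr -(1 + min a b) * real (min t (T - t)) powr -(1 + max a b)"
    by (simp add: total of_nat_min max_add_distrib_right[symmetric]
        min_add_distrib_right[symmetric] max.commute min.commute)
  finally show ?thesis .
qed

theorem lemma5:
  fixes \<alpha> \<beta> :: real and T :: nat
  assumes "\<beta> > -1" and "0 < \<alpha>" and "\<alpha> < 1" and "T \<ge> 2"
  shows "S_sum T \<alpha> \<beta>
    \<le> 2 powr (2 + min \<alpha> \<beta>) * xi (max \<alpha> \<beta>) / (real T) powr (1 + min \<alpha> \<beta>)"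
proof -
  define C where "C = (real T / 2) powr -(1 + min \<alpha> \<beta>)"
  define h where "h = (\<lambda>k::nat. real k powr -(1 + max \<alpha> \<beta>))"
  have "S_sum T \<alpha> \<beta> \<le> (\<Sum>t=1..T-1. C * h (min t (T - t)))"
    unfolding S_sum_def C_def h_def using assms by (intro sum_mono S_sum_summand_le) auto
  also have "\<dots> \<le> C * (2 * (\<Sum>t=1..T-1. h t))"
    unfolding sum_distrib_left[symmetric] C_def h_def
    by (intro mult_left_mono sum_min_reflect_le) auto
  also have "\<dots> \<le> C * (2 * xi (max \<alpha> \<beta>))"
    unfolding h_def C_def using assms by (intro mult_left_mono sum_powr_le_xi) auto
  also have "\<dots> = 2 powr (2 + min \<alpha> \<beta>) * xi (max \<alpha> \<beta>) / (real T) powr (1 + min \<alpha> \<beta>)"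
    unfolding C_def powr_minus_divide powr_divide
    by (simp add: powr_add[of "2::real" 1 "1 + min \<alpha> \<beta>", simplified])
  finally show ?thesis .
qed

end
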